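(* Let $\mathcal{H}_c=\mathcal{H}_{c'}=\ell^2(\mathbb{Z})$ with orthonormal bases $(|\tau\rangle_c)_{\tau\in\mathbb{Z}}$, $(|\tau\rangle_{c'})_{\tau\in\mathbb{Z}}$ and bilateral shifts $U_c|\tau\rangle_c=|\tau+1\rangle_c$, $U_{c'}|\tau\rangle_{c'}=|\tau+1\rangle_{c'}$. Let $\mathcal{H}_r$, $\mathcal{H}_{r'}$ be separable Hilbert spaces with $\dim\mathcal{H}_r=\dim\mathcal{H}_{r'}$ and unitaries $U_r$, $U_{r'}$ on them; set $U=U_c\otimes U_r$, $U'=U_{c'}\otimes U_{r'}$. For any unit vectors $|\psi(0)\rangle_r\in\mathcal{H}_r$, $|\psi'(0)\rangle_{r'}\in\mathcal{H}_{r'}$, with $|\Psi(\tau)\rangle=U^\tau|0\rangle_c|\psi(0)\rangle_r=|\tau\rangle_c U_r^\tau|\psi(0)\rangle_r$ and $|\Psi'(\tau)\rangle=U'^\tau|0\rangle_{c'}|\psi'(0)\rangle_{r'}$, there exists a unitary operator $S:\mathcal{H}_c\otimes\mathcal{H}_r\to\mathcal{H}_{c'}\otimes\mathcal{H}_{r'}$ such that $|\Psi'(\tau)\rangle=S|\Psi(\tau)\rangle$ for all $\tau\in\mathbb{Z}$ and $U'=SUS^{-1}$.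
   Context: This is the infinite discrete-time Page-Wootters setting: a clock with time values $\tau\in\mathbb{Z}$ whose one-step evolution is the bilateral shift, and a "rest of the world" with one-step unitary evolution $U_r$. *)

theory Defs
  imports "HOL-Analysis.Analysis"
begin

text \<open>Separable complex Hilbert spaces are modelled as l2(I) over a countable
index type I (an orthonormal basis).  Vectors are functions I => complex.\<close>

definition l2 :: "('i \<Rightarrow> complex) set" where
  "l2 = {f. (\<lambda>x. (cmod (f x))^2) summable_on UNIV}"

definition l2_inner :: "('i \<Rightarrow> complex) \<Rightarrow> ('i \<Rightarrow> complex) \<Rightarrow> complex" where
  "l2_inner f g = infsum (\<lambda>x. cnj (f x) * g x) UNIV"

definition l2_norm :: "('i \<Rightarrow> complex) \<Rightarrow> real" where
  "l2_norm f = sqrt (infsum (\<lambda>x. (cmod (f x))^2) UNIV)"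

text \<open>Unitary operator l2(I) -> l2(J): linear, bijective onto l2(J), inner-product preserving.
Values outside l2 are irrelevant.\<close>
definition unitary_l2 :: "(('i \<Rightarrow> complex) \<Rightarrow> ('j \<Rightarrow> complex)) \<Rightarrow> bool" where
  "unitary_l2 T \<longleftrightarrow>
     bij_betw T l2 l2 \<and>
     (\<forall>f\<in>l2. \<forall>g\<in>l2. \<forall>c::complex. T (\<lambda>x. f x + c * g x) = (\<lambda>y. T f y + c * T g y)) \<and>
     (\<forall>f\<in>l2. \<forall>g\<in>l2. l2_inner (T f) (T g) = l2_inner f g)"

definition upow :: "(('i \<Rightarrow> complex) \<Rightarrow> ('i \<Rightarrow> complex)) \<Rightarrow> int \<Rightarrow> ('i \<Rightarrow> complex) \<Rightarrow> ('i \<Rightarrow> complex)" where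
  "upow T k = (if 0 \<le> k then T ^^ nat k else (inv_into l2 T) ^^ nat (- k))"

text \<open>l2(Z) tensor l2(I) = l2(Z x I).  The clock basis vector |tau> tensor psi: \<close>
definition clock_ket :: "int \<Rightarrow> ('i \<Rightarrow> complex) \<Rightarrow> (int \<times> 'i \<Rightarrow> complex)" where
  "clock_ket t psi = (\<lambda>(s, a). if s = t then psi a else 0)"

text \<open>U_c tensor U_r where U_c is the bilateral shift |tau> -> |tau+1>:
  (U F)(tau, .) = U_r (F(tau - 1, .)).\<close>
definition shift_tensor :: "(('i \<Rightarrow> complex) \<Rightarrow> ('i \<Rightarrow> complex)) \<Rightarrow> (int \<times> 'i \<Rightarrow> complex) \<Rightarrow> (int \<times> 'i \<Rightarrow> complex)" where
  "shift_tensor Ur F = (\<lambda>(t, a). Ur (\<lambda>b. F (t - 1, b)) a)"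

end

theory Submission
  imports Defs
begin

text \<open>Fix a unitary V from l2('a) to l2('b) with V psi0 = psi0'. It exists because the two
index types are in bijection and the unitaries of a Hilbert space act transitively on its unit
vectors (a phase followed by a reflection). Letting Ur'^t V Ur^-t act on the clock slice t gives
a unitary S of l2(Z x 'a) onto l2(Z x 'b) that intertwines U_c tensor U_r with U_c' tensor U_r'
and sends |0>|psi0> to |0>|psi0'>; hence it sends U^t|0>|psi0> to U'^t|0>|psi0'> for all t.\<close>

lemma mem_l2_iff: "f \<in> l2 \<longleftrightarrow> (\<lambda>x. (cmod (f x))^2) summable_on UNIV"
  by (simp add: l2_def)

lemma l2_inner_summable:
  assumes "f \<in> l2" "g \<in> l2"
  shows "(\<lambda>x. cnj (f x) * g x) summable_on UNIV"
proof -
  have sq: "(\<lambda>x. (cmod (f x))^2 + (cmod (g x))^2) summable_on UNIV"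
    using assms by (intro summable_on_add) (auto simp: mem_l2_iff)
  have "norm (cnj (f x) * g x) \<le> (cmod (f x))^2 + (cmod (g x))^2" for x
    using sum_squares_bound[of "cmod (f x)" "cmod (g x)"]
    by (simp add: norm_mult mult.assoc) (smt (verit) mult_nonneg_nonneg norm_ge_zero)
  then have "(\<lambda>x. norm (cnj (f x) * g x)) summable_on UNIV"
    by (intro summable_on_comparison_test[OF sq]) auto
  then show ?thesis
    using summable_on_iff_abs_summable_on_complex by blast
qed

lemma l2_lincomb:
  assumes "f \<in> l2" "g \<in> l2"
  shows "(\<lambda>x. f x + c * g x) \<in> l2"
proof -
  have sq: "(\<lambda>x. 2 * (cmod (f x))^2 + 2 * (cmod c)^2 * (cmod (g x))^2) summable_on UNIV"
    using assms by (intro summable_on_cmult_right summable_on_add) (auto simp: mem_l2_iff)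
  have "(cmod (f x + c * g x))^2 \<le> 2 * (cmod (f x))^2 + 2 * (cmod c)^2 * (cmod (g x))^2" for x
  proof -
    have "cmod (f x + c * g x) \<le> cmod (f x) + cmod c * cmod (g x)"
      by (metis norm_mult norm_triangle_ineq)
    then have "(cmod (f x + c * g x))^2 \<le> (cmod (f x) + cmod c * cmod (g x))^2"
      by (intro power_mono) auto
    also have "\<dots> \<le> 2 * (cmod (f x))^2 + 2 * (cmod c * cmod (g x))^2"
      using sum_squares_bound[of "cmod (f x)" "cmod c * cmod (g x)"]
      unfolding power2_sum by linarith
    finally show ?thesis
      by (simp add: power_mult_distrib)
  qed
  then show ?thesis
    unfolding mem_l2_iff by (intro summable_on_comparison_test[OF sq]) auto
qed

lemma l2_zero: "(\<lambda>x. 0) \<in> l2"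
  by (simp add: mem_l2_iff)

lemma l2_scale: "f \<in> l2 \<Longrightarrow> (\<lambda>x. c * f x) \<in> l2"
  using l2_lincomb[OF l2_zero, of f c] by simp

lemma l2_inner_cnj_commute: "l2_inner g f = cnj (l2_inner f g)"
  unfolding l2_inner_def infsum_cnj[symmetric] by (simp add: mult.commute)

lemma l2_inner_lincomb_right:
  assumes "f \<in> l2" "g \<in> l2" "h \<in> l2"
  shows "l2_inner f (\<lambda>x. g x + c * h x) = l2_inner f g + c * l2_inner f h"
proof -
  have "l2_inner f (\<lambda>x. g x + c * h x) =
      infsum (\<lambda>x. cnj (f x) * g x + c * (cnj (f x) * h x)) UNIV"
    unfolding l2_inner_def by (simp add: algebra_simps)
  also have "\<dots> = l2_inner f g + c * l2_inner f h"
    unfolding l2_inner_def using assms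
    by (subst infsum_add) (auto intro!: summable_on_cmult_right l2_inner_summable
        simp: infsum_cmult_right')
  finally show ?thesis .
qed

lemma l2_inner_lincomb_left:
  assumes "f \<in> l2" "g \<in> l2" "h \<in> l2"
  shows "l2_inner (\<lambda>x. g x + c * h x) f = l2_inner g f + cnj c * l2_inner h f"
  using l2_inner_lincomb_right[OF assms, of c]
  by (metis l2_inner_cnj_commute complex_cnj_add complex_cnj_mult complex_cnj_cnj)

lemma l2_inner_scale_left: "l2_inner (\<lambda>x. c * f x) g = cnj c * l2_inner f g"
  unfolding l2_inner_def by (simp add: infsum_cmult_right'[symmetric] mult.assoc)

lemma l2_inner_self:
  assumes "f \<in> l2"
  shows "l2_inner f f = of_real (infsum (\<lambda>x. (cmod (f x))^2) UNIV)"
proof -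
  have "((\<lambda>x. (cmod (f x))^2) has_sum infsum (\<lambda>x. (cmod (f x))^2) UNIV) UNIV"
    using assms by (simp add: mem_l2_iff)
  then have "((\<lambda>x. of_real ((cmod (f x))^2) :: complex)
      has_sum of_real (infsum (\<lambda>x. (cmod (f x))^2) UNIV)) UNIV"
    by (simp only: has_sum_of_real_iff)
  moreover have "of_real ((cmod (f x))^2) = cnj (f x) * f x" for x
    by (metis complex_norm_square mult.commute of_real_power)
  ultimately show ?thesis
    unfolding l2_inner_def by (simp add: infsumI)
qed

lemma l2_inner_self_cnj: "cnj (l2_inner f f) = l2_inner f f"
  using l2_inner_cnj_commute[of f f] by simp

lemma l2_inner_self_eq_0:
  assumes "f \<in> l2" "l2_inner f f = 0"
  shows "f = (\<lambda>x. 0)"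
proof
  fix x
  have "infsum (\<lambda>x. (cmod (f x))^2) UNIV = 0"
    using l2_inner_self[OF assms(1)] assms(2) by simp
  then have "(cmod (f x))^2 = 0"
    using assms(1) by (intro nonneg_infsum_le_0D[where A = UNIV]) (auto simp: mem_l2_iff)
  then show "f x = 0" by simp
qed

lemma l2_inner_self_eq_1: "f \<in> l2 \<Longrightarrow> l2_norm f = 1 \<Longrightarrow> l2_inner f f = 1"
  by (simp add: l2_inner_self l2_norm_def)


lemma unitary_l2D:
  assumes "unitary_l2 T"
  shows "\<And>f. f \<in> l2 \<Longrightarrow> T f \<in> l2"
    and "\<And>f g c. f \<in> l2 \<Longrightarrow> g \<in> l2 \<Longrightarrow> T (\<lambda>x. f x + c * g x) = (\<lambda>y. T f y + c * T g y)"
    and "\<And>f g. f \<in> l2 \<Longrightarrow> g \<in> l2 \<Longrightarrow> l2_inner (T f) (T g) = l2_inner f g"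
    and "inj_on T l2" and "T ` l2 = l2"
  using assms unfolding unitary_l2_def bij_betw_def by auto

lemma unitary_l2I:
  assumes maps: "\<And>f. f \<in> l2 \<Longrightarrow> T f \<in> l2"
    and lin: "\<And>f g c. f \<in> l2 \<Longrightarrow> g \<in> l2 \<Longrightarrow> T (\<lambda>x. f x + c * g x) = (\<lambda>y. T f y + c * T g y)"
    and inner: "\<And>f g. f \<in> l2 \<Longrightarrow> g \<in> l2 \<Longrightarrow> l2_inner (T f) (T g) = l2_inner f g"
    and surj: "\<And>g. g \<in> l2 \<Longrightarrow> \<exists>f\<in>l2. T f = g"
  shows "unitary_l2 T"
proof -
  have "inj_on T l2"
  proof (rule inj_onI)
    fix f g assume f: "f \<in> l2" and g: "g \<in> l2" and eq: "T f = T g"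
    define d where "d = (\<lambda>x. f x + (-1) * g x)"
    have d: "d \<in> l2"
      unfolding d_def using f g by (rule l2_lincomb)
    have "T d = (\<lambda>y. T f y + (-1) * T g y)"
      unfolding d_def using lin f g by blast
    then have "T d = (\<lambda>y. 0)"
      using eq by simp
    then have "l2_inner d d = 0"
      using inner[OF d d] by (simp add: l2_inner_def)
    then have "d = (\<lambda>x. 0)"
      using d l2_inner_self_eq_0 by blast
    then show "f = g"
      unfolding d_def by (auto simp: fun_eq_iff)
  qed
  moreover have "T ` l2 = l2"
    using maps surj by blast
  ultimately show ?thesis
    unfolding unitary_l2_def bij_betw_def using lin inner by blast
qed

lemma unitary_l2_inv_into:
  assumes T: "unitary_l2 T" and g: "g \<in> l2"
  shows "T (inv_into l2 T g) = g" and "inv_into l2 T g \<in> l2"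
  using f_inv_into_f[of g T l2] inv_into_into[of g T l2] unitary_l2D(5)[OF T] g by simp_all

lemma unitary_l2_zero: "unitary_l2 T \<Longrightarrow> T (\<lambda>x. 0) = (\<lambda>x. 0)"
  using unitary_l2D(2)[of T "\<lambda>x. 0" "\<lambda>x. 0" 1] l2_zero by (simp add: fun_eq_iff)

lemma unitary_l2_id: "unitary_l2 (\<lambda>f. f)"
  by (rule unitary_l2I) auto

lemma unitary_l2_comp:
  fixes S :: "('b \<Rightarrow> complex) \<Rightarrow> ('c \<Rightarrow> complex)"
    and T :: "('a \<Rightarrow> complex) \<Rightarrow> ('b \<Rightarrow> complex)"
  assumes S: "unitary_l2 S" and T: "unitary_l2 T"
  shows "unitary_l2 (\<lambda>f. S (T f))"
proof (rule unitary_l2I)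
  fix f g :: "'a \<Rightarrow> complex" and c assume f: "f \<in> l2" and g: "g \<in> l2"
  note Tf = unitary_l2D(1)[OF T f] and Tg = unitary_l2D(1)[OF T g]
  show "S (T (\<lambda>x. f x + c * g x)) = (\<lambda>y. S (T f) y + c * S (T g) y)"
    using unitary_l2D(2)[OF T f g] unitary_l2D(2)[OF S Tf Tg] by simp
  show "l2_inner (S (T f)) (S (T g)) = l2_inner f g"
    using unitary_l2D(3)[OF S Tf Tg] unitary_l2D(3)[OF T f g] by simp
next
  fix f :: "'a \<Rightarrow> complex" assume "f \<in> l2"
  then show "S (T f) \<in> l2"
    using unitary_l2D(1)[OF S] unitary_l2D(1)[OF T] by simp
next
  fix h :: "'c \<Rightarrow> complex" assume "h \<in> l2"
  then show "\<exists>f\<in>l2. S (T f) = h"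
    using unitary_l2D(5)[OF S] unitary_l2D(5)[OF T] by (metis imageE)
qed

lemma unitary_l2_inv:
  fixes T :: "('a \<Rightarrow> complex) \<Rightarrow> ('b \<Rightarrow> complex)"
  assumes T: "unitary_l2 T"
  shows "unitary_l2 (inv_into l2 T)"
proof (rule unitary_l2I)
  note inv = unitary_l2_inv_into[OF T]
  fix f g :: "'b \<Rightarrow> complex" and c assume f: "f \<in> l2" and g: "g \<in> l2"
  have "T (\<lambda>x. inv_into l2 T f x + c * inv_into l2 T g x) = (\<lambda>x. f x + c * g x)"
    using unitary_l2D(2)[OF T inv(2)[OF f] inv(2)[OF g], of c] inv(1)[OF f] inv(1)[OF g] by simp
  moreover have "(\<lambda>x. inv_into l2 T f x + c * inv_into l2 T g x) \<in> l2"
    by (rule l2_lincomb[OF inv(2)[OF f] inv(2)[OF g]])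
  ultimately show "inv_into l2 T (\<lambda>x. f x + c * g x) = (\<lambda>y. inv_into l2 T f y + c * inv_into l2 T g y)"
    using inv_into_f_f[OF unitary_l2D(4)[OF T]] by metis
  show "l2_inner (inv_into l2 T f) (inv_into l2 T g) = l2_inner f g"
    using unitary_l2D(3)[OF T inv(2)[OF f] inv(2)[OF g]] inv(1) f g by simp
next
  fix f :: "'b \<Rightarrow> complex" assume "f \<in> l2"
  then show "inv_into l2 T f \<in> l2"
    by (rule unitary_l2_inv_into(2)[OF T])
next
  fix g :: "'a \<Rightarrow> complex" assume g: "g \<in> l2"
  then show "\<exists>f\<in>l2. inv_into l2 T f = g"
    using inv_into_f_f[OF unitary_l2D(4)[OF T] g] unitary_l2D(1)[OF T g] by blast
qed

lemma unitary_l2_funpow: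
  fixes T :: "('a \<Rightarrow> complex) \<Rightarrow> ('a \<Rightarrow> complex)"
  assumes "unitary_l2 T"
  shows "unitary_l2 (T ^^ n)"
proof (induction n)
  case 0
  then show ?case
    using unitary_l2_id by (simp add: id_def)
next
  case (Suc n)
  then show ?case
    using unitary_l2_comp[OF assms Suc] by (simp add: comp_def)
qed

lemma unitary_l2_upow: "unitary_l2 T \<Longrightarrow> unitary_l2 (upow T k)"
  unfolding upow_def by (auto intro: unitary_l2_funpow unitary_l2_inv)

lemma unitary_l2_reindex:
  fixes h :: "'b \<Rightarrow> 'a"
  assumes h: "bij h"
  shows "unitary_l2 (\<lambda>f x. f (h x))"
proof (rule unitary_l2I)
  have l2: "(\<lambda>x. f (k x)) \<in> l2" if "f \<in> l2" "bij k" for f :: "'c \<Rightarrow> complex" and k :: "'d \<Rightarrow> 'c"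
    using that summable_on_reindex_bij_betw[OF that(2), of "\<lambda>x. (cmod (f x))^2"]
    by (simp add: mem_l2_iff)
  fix f :: "'a \<Rightarrow> complex" assume "f \<in> l2"
  then show "(\<lambda>x. f (h x)) \<in> l2"
    using h by (rule l2)
next
  fix f g :: "'a \<Rightarrow> complex"
  show "l2_inner (\<lambda>x. f (h x)) (\<lambda>x. g (h x)) = l2_inner f g"
    unfolding l2_inner_def using infsum_reindex_bij_betw[OF h, of "\<lambda>x. cnj (f x) * g x"] by simp
next
  fix g :: "'b \<Rightarrow> complex" assume g: "g \<in> l2"
  have "(\<lambda>x. g (inv h x)) \<in> l2"
    using summable_on_reindex_bij_betw[OF bij_imp_bij_inv[OF h], of "\<lambda>x. (cmod (g x))^2"] g
    by (simp add: mem_l2_iff)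
  moreover have "(\<lambda>x. g (inv h (h x))) = g"
    using h by (simp add: bij_def)
  ultimately show "\<exists>f\<in>l2. (\<lambda>x. f (h x)) = g"
    by (intro bexI[of _ "\<lambda>x. g (inv h x)"])
qed simp

lemma unitary_l2_scalar:
  assumes c: "cmod c = 1"
  shows "unitary_l2 (\<lambda>f x. c * f x)"
proof (rule unitary_l2I)
  fix f g :: "'a \<Rightarrow> complex"
  have "cnj c * c = 1"
    using c by (metis complex_norm_square mult.commute of_real_1 power_one)
  then have phase: "cnj (c * f x) * (c * g x) = cnj (f x) * g x" for x
    by (metis complex_cnj_mult mult.assoc mult.commute mult.left_neutral)
  show "l2_inner (\<lambda>x. c * f x) (\<lambda>x. c * g x) = l2_inner f g"
    unfolding l2_inner_def phase ..
next
  fix g :: "'a \<Rightarrow> complex" assume g: "g \<in> l2"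
  have "c \<noteq> 0"
    using c by auto
  then have "(\<lambda>x. c * (inverse c * g x)) = g"
    by (simp add: fun_eq_iff mult.assoc[symmetric])
  then show "\<exists>f\<in>l2. (\<lambda>x. c * f x) = g"
    using l2_scale[OF g, of "inverse c"] by (intro bexI[of _ "\<lambda>x. inverse c * g x"])
qed (auto intro: l2_scale simp: algebra_simps)

lemma unitary_l2_sum_squares:
  assumes "unitary_l2 T" "f \<in> l2"
  shows "infsum (\<lambda>x. (cmod (T f x))^2) UNIV = infsum (\<lambda>x. (cmod (f x))^2) UNIV"
  using unitary_l2D(3)[OF assms(1,2,2)] l2_inner_self[OF assms(2)]
    l2_inner_self[OF unitary_l2D(1)[OF assms]] by simp


section \<open>Transitivity on unit vectors\<close>

definition l2_reflection :: "('a \<Rightarrow> complex) \<Rightarrow> ('a \<Rightarrow> complex) \<Rightarrow> ('a \<Rightarrow> complex)" where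
  "l2_reflection w f = (\<lambda>x. f x + (- 2 * l2_inner w f / l2_inner w w) * w x)"

context
  fixes w :: "'a \<Rightarrow> complex"
  assumes w: "w \<in> l2" and w_nonzero: "l2_inner w w \<noteq> 0"
begin

lemma l2_reflection_l2: "f \<in> l2 \<Longrightarrow> l2_reflection w f \<in> l2"
  unfolding l2_reflection_def using l2_lincomb w by blast

lemma l2_inner_reflection_right:
  assumes f: "f \<in> l2"
  shows "l2_inner w (l2_reflection w f) = - l2_inner w f"
proof -
  have "l2_inner w (l2_reflection w f)
      = l2_inner w f + (- 2 * l2_inner w f / l2_inner w w) * l2_inner w w"
    unfolding l2_reflection_def by (rule l2_inner_lincomb_right[OF w f w])
  then show ?thesis
    using w_nonzero by simp
qed

lemma l2_reflection_involutive:
  assumes f: "f \<in> l2"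
  shows "l2_reflection w (l2_reflection w f) = f"
proof -
  have "l2_reflection w (l2_reflection w f)
      = (\<lambda>x. l2_reflection w f x + (- 2 * (- l2_inner w f) / l2_inner w w) * w x)"
    unfolding l2_reflection_def[of w "l2_reflection w f"] l2_inner_reflection_right[OF f] ..
  also have "\<dots> = f"
    by (simp add: l2_reflection_def fun_eq_iff)
  finally show ?thesis .
qed

lemma l2_reflection_lincomb:
  assumes "f \<in> l2" "g \<in> l2"
  shows "l2_reflection w (\<lambda>x. f x + c * g x) = (\<lambda>x. l2_reflection w f x + c * l2_reflection w g x)"
  unfolding l2_reflection_def l2_inner_lincomb_right[OF w assms]
  using w_nonzero by (simp add: fun_eq_iff field_simps)

lemma l2_reflection_selfadjoint:
  assumes f: "f \<in> l2" and g: "g \<in> l2"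
  shows "l2_inner (l2_reflection w f) g = l2_inner f (l2_reflection w g)"
proof -
  have "l2_inner (l2_reflection w f) g
      = l2_inner f g + cnj (- 2 * l2_inner w f / l2_inner w w) * l2_inner w g"
    unfolding l2_reflection_def by (rule l2_inner_lincomb_left[OF g f w])
  also have "cnj (- 2 * l2_inner w f / l2_inner w w) = - 2 * l2_inner f w / l2_inner w w"
    using l2_inner_cnj_commute[of f w] l2_inner_self_cnj[of w] by simp
  also have "l2_inner f g + (- 2 * l2_inner f w / l2_inner w w) * l2_inner w g
      = l2_inner f g + (- 2 * l2_inner w g / l2_inner w w) * l2_inner f w"
    by simp
  also have "\<dots> = l2_inner f (l2_reflection w g)"
    unfolding l2_reflection_def by (rule l2_inner_lincomb_right[OF f g w, symmetric])
  finally show ?thesis .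
qed

lemma unitary_l2_reflection: "unitary_l2 (l2_reflection w)"
proof (rule unitary_l2I)
  fix f g :: "'a \<Rightarrow> complex" assume f: "f \<in> l2" and g: "g \<in> l2"
  have "l2_inner (l2_reflection w f) (l2_reflection w g)
      = l2_inner f (l2_reflection w (l2_reflection w g))"
    using l2_reflection_selfadjoint[OF f l2_reflection_l2[OF g]] .
  then show "l2_inner (l2_reflection w f) (l2_reflection w g) = l2_inner f g"
    using l2_reflection_involutive[OF g] by simp
next
  fix g :: "'a \<Rightarrow> complex" assume "g \<in> l2"
  then show "\<exists>f\<in>l2. l2_reflection w f = g"
    using l2_reflection_l2 l2_reflection_involutive by blast
qed (simp_all add: l2_reflection_l2 l2_reflection_lincomb)

end

text \<open>When the overlap of u and v is real, the reflection in u - v maps u to v.\<close>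

lemma unitary_l2_map_real_overlap:
  fixes u v :: "'a \<Rightarrow> complex"
  assumes u: "u \<in> l2" and v: "v \<in> l2" and uu: "l2_inner u u = 1" and vv: "l2_inner v v = 1"
    and real: "l2_inner v u = l2_inner u v"
  shows "\<exists>R. unitary_l2 R \<and> R u = v"
proof -
  define w where "w = (\<lambda>x. u x + (-1) * v x)"
  have w: "w \<in> l2"
    unfolding w_def using u v by (rule l2_lincomb)
  have wu: "l2_inner w u = 1 - l2_inner u v"
    unfolding w_def using l2_inner_lincomb_left[OF u u v, of "-1"] uu real by simp
  have uw: "l2_inner u w = 1 - l2_inner u v"
    unfolding w_def using l2_inner_lincomb_right[OF u u v, of "-1"] uu by simp
  have vw: "l2_inner v w = l2_inner u v - 1"
    unfolding w_def using l2_inner_lincomb_right[OF v u v, of "-1"] vv real by simp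
  have "l2_inner w w = l2_inner u w + cnj (-1) * l2_inner v w"
    using l2_inner_lincomb_left[OF w u v, of "-1"] unfolding w_def[symmetric] .
  then have ww: "l2_inner w w = 2 * (1 - l2_inner u v)"
    unfolding uw vw by simp
  show ?thesis
  proof (cases "l2_inner w w = 0")
    case True
    then have "u = v"
      using l2_inner_self_eq_0[OF w] by (auto simp: w_def fun_eq_iff)
    then show ?thesis
      using unitary_l2_id by blast
  next
    case False
    then have "- 2 * l2_inner w u / l2_inner w w = -1"
      unfolding wu ww by (simp add: field_simps)
    then have "l2_reflection w u = v"
      by (simp add: l2_reflection_def w_def fun_eq_iff)
    then show ?thesis
      using unitary_l2_reflection[OF w False] by blast
  qed
qed

lemma unitary_l2_transitive:
  fixes u v :: "'a \<Rightarrow> complex"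
  assumes u: "u \<in> l2" and v: "v \<in> l2" and uu: "l2_inner u u = 1" and vv: "l2_inner v v = 1"
  shows "\<exists>R. unitary_l2 R \<and> R u = v"
proof -
  define c where "c = l2_inner u v"
  obtain lam where lam: "cmod lam = 1" and lam_c: "cnj lam * c = of_real (cmod c)"
  proof (cases "c = 0")
    case False
    have "cnj c * c = of_real ((cmod c)^2)"
      using complex_norm_square[of c] by (simp add: mult.commute)
    then have "cnj (c / of_real (cmod c)) * c = of_real (cmod c)"
      using False by (simp add: power2_eq_square field_simps)
    then show ?thesis
      using False that[of "c / of_real (cmod c)"] by (simp add: norm_divide)
  qed (use that[of 1] in simp)
  define u' where "u' = (\<lambda>x. lam * u x)"
  have phase: "unitary_l2 (\<lambda>f x. lam * f x)"
    using lam by (rule unitary_l2_scalar)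
  have u': "u' \<in> l2" and u'u': "l2_inner u' u' = 1"
    unfolding u'_def using l2_scale[OF u] unitary_l2D(3)[OF phase u u] uu by simp_all
  have u'v: "l2_inner u' v = of_real (cmod c)"
    unfolding u'_def l2_inner_scale_left c_def[symmetric] by (rule lam_c)
  then have "l2_inner v u' = l2_inner u' v"
    using l2_inner_cnj_commute[of v u'] by simp
  then obtain R where R: "unitary_l2 R" "R u' = v"
    using unitary_l2_map_real_overlap[OF u' v u'u' vv] by blast
  have "unitary_l2 (\<lambda>f. R (\<lambda>x. lam * f x))"
    by (rule unitary_l2_comp[OF R(1) phase])
  moreover have "R (\<lambda>x. lam * u x) = v"
    using R(2) unfolding u'_def .
  ultimately show ?thesis
    by blast
qed

lemma unitary_l2_map_unit_vector:
  fixes g :: "'a \<Rightarrow> 'b" and u :: "'a \<Rightarrow> complex" and v :: "'b \<Rightarrow> complex"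
  assumes g: "bij g" and u: "u \<in> l2" "l2_norm u = 1" and v: "v \<in> l2" "l2_norm v = 1"
  shows "\<exists>V. unitary_l2 V \<and> V u = v"
proof -
  define P where "P = (\<lambda>(f :: 'a \<Rightarrow> complex) y. f (inv g y))"
  have P: "unitary_l2 P"
    unfolding P_def using g by (intro unitary_l2_reindex bij_imp_bij_inv)
  have "P u \<in> l2" and "l2_inner (P u) (P u) = 1"
    using unitary_l2D(1,3)[OF P] u l2_inner_self_eq_1[OF u] by simp_all
  then obtain R where R: "unitary_l2 R" "R (P u) = v"
    using unitary_l2_transitive[OF _ v(1) _ l2_inner_self_eq_1[OF v]] by blast
  show ?thesis
    using unitary_l2_comp[OF R(1) P] R(2) by blast
qed


section \<open>Operators acting slice by slice\<close>

definition fibrewise ::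
    "('i \<Rightarrow> ('a \<Rightarrow> complex) \<Rightarrow> ('b \<Rightarrow> complex)) \<Rightarrow> ('i \<times> 'a \<Rightarrow> complex) \<Rightarrow> ('i \<times> 'b \<Rightarrow> complex)"
  where "fibrewise W F = (\<lambda>(t, a). W t (\<lambda>b. F (t, b)) a)"

lemma fibrewise_slice: "(\<lambda>b. fibrewise W F (t, b)) = W t (\<lambda>b. F (t, b))"
  by (simp add: fibrewise_def)

lemma mem_l2_prod_iff:
  fixes F :: "'i \<times> 'a \<Rightarrow> complex"
  shows "F \<in> l2 \<longleftrightarrow> (\<forall>t. (\<lambda>b. F (t, b)) \<in> l2) \<and>
      (\<lambda>t. infsum (\<lambda>b. (cmod (F (t, b)))^2) UNIV) summable_on UNIV"
proof
  assume "F \<in> l2"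
  moreover have "(\<lambda>(t, b). (cmod (F (t, b)))^2) = (\<lambda>p. (cmod (F p))^2)"
    by auto
  ultimately have sq: "(\<lambda>(t, b). (cmod (F (t, b)))^2) summable_on UNIV \<times> UNIV"
    by (simp add: mem_l2_iff)
  show "(\<forall>t. (\<lambda>b. F (t, b)) \<in> l2) \<and> (\<lambda>t. infsum (\<lambda>b. (cmod (F (t, b)))^2) UNIV) summable_on UNIV"
    using summable_on_SigmaD1[OF sq] summable_on_Sigma_banach[OF sq] by (simp add: mem_l2_iff)
next
  assume slices: "(\<forall>t. (\<lambda>b. F (t, b)) \<in> l2) \<and>
      (\<lambda>t. infsum (\<lambda>b. (cmod (F (t, b)))^2) UNIV) summable_on UNIV"
  have "(\<lambda>p. (cmod (F p))^2) summable_on UNIV \<times> UNIV"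
  proof (rule summable_on_SigmaI[where g = "\<lambda>t. infsum (\<lambda>b. (cmod (F (t, b)))^2) UNIV"])
    fix t
    show "((\<lambda>b. (cmod (F (t, b)))^2) has_sum infsum (\<lambda>b. (cmod (F (t, b)))^2) UNIV) UNIV"
      using slices by (simp add: mem_l2_iff)
  qed (use slices in auto)
  then show "F \<in> l2"
    by (simp add: mem_l2_iff)
qed

lemma l2_slice: "F \<in> l2 \<Longrightarrow> (\<lambda>b. F (t, b)) \<in> l2"
  unfolding mem_l2_prod_iff[of F] by blast

lemma l2_inner_prod:
  fixes F G :: "'i \<times> 'a \<Rightarrow> complex"
  assumes "F \<in> l2" "G \<in> l2"
  shows "l2_inner F G = infsum (\<lambda>t. l2_inner (\<lambda>b. F (t, b)) (\<lambda>b. G (t, b))) UNIV"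
proof -
  have prod: "(\<lambda>(t, b). cnj (F (t, b)) * G (t, b)) = (\<lambda>p. cnj (F p) * G p)"
    by auto
  have "(\<lambda>(t, b). cnj (F (t, b)) * G (t, b)) summable_on UNIV \<times> UNIV"
    unfolding prod using l2_inner_summable[OF assms] by simp
  from infsum_Sigma'_banach[OF this] show ?thesis
    unfolding l2_inner_def prod by simp
qed

lemma fibrewise_l2:
  assumes W: "\<And>t. unitary_l2 (W t)" and F: "F \<in> l2"
  shows "fibrewise W F \<in> l2"
proof -
  have "infsum (\<lambda>b. (cmod (fibrewise W F (t, b)))^2) UNIV = infsum (\<lambda>b. (cmod (F (t, b)))^2) UNIV"
    for t
    using unitary_l2_sum_squares[OF W l2_slice[OF F], of t] by (simp add: fibrewise_def)
  then show ?thesis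
    using F unitary_l2D(1)[OF W l2_slice[OF F]] unfolding mem_l2_prod_iff fibrewise_slice
    by simp
qed

lemma unitary_l2_fibrewise:
  fixes W :: "'i \<Rightarrow> ('a \<Rightarrow> complex) \<Rightarrow> ('b \<Rightarrow> complex)"
  assumes W: "\<And>t. unitary_l2 (W t)"
  shows "unitary_l2 (fibrewise W)"
proof (rule unitary_l2I)
  fix F G :: "'i \<times> 'a \<Rightarrow> complex" and c
  assume F: "F \<in> l2" and G: "G \<in> l2"
  show "fibrewise W (\<lambda>x. F x + c * G x) = (\<lambda>y. fibrewise W F y + c * fibrewise W G y)"
  proof
    fix p :: "'i \<times> 'b"
    obtain t a where p: "p = (t, a)"
      by (cases p)
    show "fibrewise W (\<lambda>x. F x + c * G x) p = fibrewise W F p + c * fibrewise W G p"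
      unfolding p fibrewise_def
      using unitary_l2D(2)[OF W[of t] l2_slice[OF F, of t] l2_slice[OF G, of t], of c]
      by (simp add: fun_eq_iff)
  qed
  have "l2_inner (fibrewise W F) (fibrewise W G)
      = infsum (\<lambda>t. l2_inner (W t (\<lambda>b. F (t, b))) (W t (\<lambda>b. G (t, b)))) UNIV"
    using l2_inner_prod[OF fibrewise_l2[OF W F] fibrewise_l2[OF W G]] by (simp add: fibrewise_slice)
  also have "\<dots> = l2_inner F G"
    using l2_inner_prod[OF F G] unitary_l2D(3)[OF W l2_slice[OF F] l2_slice[OF G]] by simp
  finally show "l2_inner (fibrewise W F) (fibrewise W G) = l2_inner F G" .
next
  fix F :: "'i \<times> 'a \<Rightarrow> complex" assume "F \<in> l2"
  then show "fibrewise W F \<in> l2"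
    by (rule fibrewise_l2[OF W])
next
  fix G :: "'i \<times> 'b \<Rightarrow> complex" assume G: "G \<in> l2"
  have "fibrewise W (fibrewise (\<lambda>t. inv_into l2 (W t)) G) = G"
    using unitary_l2_inv_into(1)[OF W l2_slice[OF G]] by (auto simp: fibrewise_def fun_eq_iff)
  then show "\<exists>F\<in>l2. fibrewise W F = G"
    using fibrewise_l2[of "\<lambda>t. inv_into l2 (W t)", OF unitary_l2_inv[OF W] G] by blast
qed


lemma upow_nat: "upow T (int n) = T ^^ n"
  by (simp add: upow_def)

lemma upow_neg_nat: "upow T (- int n) = inv_into l2 T ^^ n"
  by (cases "n = 0") (simp_all add: upow_def)

lemma upow_0: "upow T 0 = (\<lambda>f. f)"
  by (simp add: upow_def id_def)

lemma upow_intertwine: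
  fixes S :: "('a \<Rightarrow> complex) \<Rightarrow> ('b \<Rightarrow> complex)"
    and U :: "('a \<Rightarrow> complex) \<Rightarrow> ('a \<Rightarrow> complex)"
    and U' :: "('b \<Rightarrow> complex) \<Rightarrow> ('b \<Rightarrow> complex)"
  assumes S: "unitary_l2 S" and U: "unitary_l2 U" and U': "unitary_l2 U'"
    and comm: "\<And>F. F \<in> l2 \<Longrightarrow> S (U F) = U' (S F)"
    and F: "F \<in> l2"
  shows "S (upow U k F) = upow U' k (S F)"
proof (cases k)
  case (nonneg n)
  have "S ((U ^^ n) F) = (U' ^^ n) (S F)"
  proof (induction n)
    case (Suc n)
    have "(U ^^ n) F \<in> l2"
      using unitary_l2D(1)[OF unitary_l2_funpow[OF U] F] .
    then show ?case
      using Suc comm by simp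
  qed simp
  then show ?thesis
    unfolding nonneg upow_nat .
next
  case (neg n)
  have inv_comm: "S (inv_into l2 U G) = inv_into l2 U' (S G)" if G: "G \<in> l2" for G
  proof -
    note UG = unitary_l2_inv_into[OF U G]
    have "U' (S (inv_into l2 U G)) = S G"
      using comm[OF UG(2)] UG(1) by simp
    then show ?thesis
      using inv_into_f_f[OF unitary_l2D(4)[OF U'] unitary_l2D(1)[OF S UG(2)]] by simp
  qed
  have "S ((inv_into l2 U ^^ m) F) = (inv_into l2 U' ^^ m) (S F)" for m
  proof (induction m)
    case (Suc m)
    have "(inv_into l2 U ^^ m) F \<in> l2"
      using unitary_l2D(1)[OF unitary_l2_funpow[OF unitary_l2_inv[OF U]] F] .
    then show ?case
      using Suc inv_comm by simp
  qed simp
  then show ?thesis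
    unfolding neg upow_neg_nat .
qed

lemma upow_commute:
  assumes T: "unitary_l2 T" and f: "f \<in> l2"
  shows "upow T k (T f) = T (upow T k f)"
  by (rule upow_intertwine[OF T T T refl f, symmetric])

lemma upow_add_one:
  assumes T: "unitary_l2 T" and f: "f \<in> l2"
  shows "upow T (k + 1) f = T (upow T k f)"
proof (cases k)
  case (nonneg n)
  then have "k + 1 = int (Suc n)"
    by simp
  then show ?thesis
    by (simp only: nonneg upow_nat) simp
next
  case (neg n)
  then have "k + 1 = - int n"
    by simp
  then have "upow T (k + 1) f = (inv_into l2 T ^^ n) f"
    by (simp add: upow_neg_nat)
  also have "\<dots> = T (inv_into l2 T ((inv_into l2 T ^^ n) f))"
    using unitary_l2_inv_into(1)[OF T unitary_l2D(1)[OF unitary_l2_funpow[OF unitary_l2_inv[OF T]] f]]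
    by simp
  also have "\<dots> = T (upow T k f)"
    unfolding neg upow_neg_nat by simp
  finally show ?thesis .
qed

lemma intertwiner_conjugate:
  assumes S: "unitary_l2 S" and comm: "\<And>F. F \<in> l2 \<Longrightarrow> S (U F) = U' (S F)" and G: "G \<in> l2"
  shows "U' G = S (U (inv_into l2 S G))"
  using comm[OF unitary_l2_inv_into(2)[OF S G]] unitary_l2_inv_into(1)[OF S G] by simp

section \<open>The clock\<close>

lemma shift_tensor_eq_fibrewise:
  "shift_tensor Ur = (\<lambda>F. fibrewise (\<lambda>_. Ur) (\<lambda>p. F ((\<lambda>(t, b). (t - 1, b)) p)))"
  by (auto simp: fun_eq_iff shift_tensor_def fibrewise_def)

lemma unitary_l2_shift_tensor:
  fixes Ur :: "('a \<Rightarrow> complex) \<Rightarrow> ('a \<Rightarrow> complex)"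
  assumes "unitary_l2 Ur"
  shows "unitary_l2 (shift_tensor Ur)"
proof -
  have "bij (\<lambda>(t :: int, b :: 'a). (t - 1, b))"
    by (rule bij_betw_byWitness[where f' = "\<lambda>(t, b). (t + 1, b)"]) auto
  then show ?thesis
    unfolding shift_tensor_eq_fibrewise
    by (rule unitary_l2_comp[OF unitary_l2_fibrewise[OF assms] unitary_l2_reindex])
qed

lemma clock_ket_l2:
  assumes "psi \<in> l2"
  shows "clock_ket t psi \<in> l2"
  unfolding mem_l2_prod_iff
proof (intro conjI allI)
  fix s
  show "(\<lambda>b. clock_ket t psi (s, b)) \<in> l2"
    using assms l2_zero by (cases "s = t") (simp_all add: clock_ket_def)
next
  let ?g = "\<lambda>s. infsum (\<lambda>b. (cmod (clock_ket t psi (s, b)))^2) UNIV"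
  have "?g s = 0" if "s \<noteq> t" for s
    using that by (simp add: clock_ket_def)
  then show "?g summable_on UNIV"
    using summable_on_cong_neutral[of UNIV "{t}" ?g ?g] by auto
qed

definition clock_intertwiner ::
    "(('a \<Rightarrow> complex) \<Rightarrow> ('a \<Rightarrow> complex)) \<Rightarrow> (('b \<Rightarrow> complex) \<Rightarrow> ('b \<Rightarrow> complex))
      \<Rightarrow> (('a \<Rightarrow> complex) \<Rightarrow> ('b \<Rightarrow> complex)) \<Rightarrow> (int \<times> 'a \<Rightarrow> complex) \<Rightarrow> (int \<times> 'b \<Rightarrow> complex)"
  where "clock_intertwiner Ur Ur' V = fibrewise (\<lambda>t f. upow Ur' t (V (upow Ur (- t) f)))"

context
  fixes Ur :: "('a \<Rightarrow> complex) \<Rightarrow> ('a \<Rightarrow> complex)"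
    and Ur' :: "('b \<Rightarrow> complex) \<Rightarrow> ('b \<Rightarrow> complex)"
    and V :: "('a \<Rightarrow> complex) \<Rightarrow> ('b \<Rightarrow> complex)"
  assumes Ur: "unitary_l2 Ur" and Ur': "unitary_l2 Ur'" and V: "unitary_l2 V"
begin

lemma unitary_l2_clock_slice: "unitary_l2 (\<lambda>f. upow Ur' t (V (upow Ur (- t) f)))"
  using unitary_l2_comp[OF unitary_l2_upow[OF Ur'] unitary_l2_comp[OF V unitary_l2_upow[OF Ur]]] .

lemma clock_slice_shift:
  assumes f: "f \<in> l2"
  shows "upow Ur' t (V (upow Ur (- t) (Ur f))) = Ur' (upow Ur' (t - 1) (V (upow Ur (- (t - 1)) f)))"
proof -
  have "upow Ur (- t) (Ur f) = upow Ur (- (t - 1)) f"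
    using upow_commute[OF Ur f] upow_add_one[OF Ur f, of "- t"] by simp
  moreover have "V (upow Ur (- (t - 1)) f) \<in> l2"
    using unitary_l2D(1)[OF unitary_l2_comp[OF V unitary_l2_upow[OF Ur]] f] .
  note upow_add_one[OF Ur' this, of "t - 1"]
  ultimately show ?thesis
    by simp
qed

lemma unitary_l2_clock_intertwiner: "unitary_l2 (clock_intertwiner Ur Ur' V)"
  unfolding clock_intertwiner_def by (rule unitary_l2_fibrewise[OF unitary_l2_clock_slice])

lemma clock_intertwiner_shift_tensor:
  assumes F: "F \<in> l2"
  shows "clock_intertwiner Ur Ur' V (shift_tensor Ur F) = shift_tensor Ur' (clock_intertwiner Ur Ur' V F)"
proof
  fix p :: "int \<times> 'b"
  obtain t a where "p = (t, a)"
    by (cases p)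
  then show "clock_intertwiner Ur Ur' V (shift_tensor Ur F) p = shift_tensor Ur' (clock_intertwiner Ur Ur' V F) p"
    using clock_slice_shift[OF l2_slice[OF F, of "t - 1"], of t]
    by (simp add: clock_intertwiner_def fibrewise_def shift_tensor_def)
qed

lemma clock_intertwiner_clock_ket_0:
  "clock_intertwiner Ur Ur' V (clock_ket 0 psi) = clock_ket 0 (V psi)"
proof
  fix p :: "int \<times> 'b"
  obtain t a where p: "p = (t, a)"
    by (cases p)
  show "clock_intertwiner Ur Ur' V (clock_ket 0 psi) p = clock_ket 0 (V psi) p"
  proof (cases "t = 0")
    case True
    then show ?thesis
      unfolding p by (simp add: clock_intertwiner_def fibrewise_def clock_ket_def upow_0)
  next
    case False
    then have "(\<lambda>b. clock_ket 0 psi (t, b)) = (\<lambda>b. 0)"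
      by (simp add: clock_ket_def)
    then show ?thesis
      unfolding p clock_intertwiner_def fibrewise_def
      using unitary_l2_zero[OF unitary_l2_clock_slice, of t] False by (simp add: clock_ket_def)
  qed
qed

end

theorem theorem3:
  fixes Ur :: "('a::countable \<Rightarrow> complex) \<Rightarrow> ('a \<Rightarrow> complex)"
    and Ur' :: "('b::countable \<Rightarrow> complex) \<Rightarrow> ('b \<Rightarrow> complex)"
    and psi0 :: "'a \<Rightarrow> complex" and psi0' :: "'b \<Rightarrow> complex"
  assumes dim_eq: "\<exists>g :: 'a \<Rightarrow> 'b. bij g"
    and Ur: "unitary_l2 Ur" and Ur': "unitary_l2 Ur'"
    and psi0: "psi0 \<in> l2" "l2_norm psi0 = 1"
    and psi0': "psi0' \<in> l2" "l2_norm psi0' = 1"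
  shows "\<exists>S :: (int \<times> 'a \<Rightarrow> complex) \<Rightarrow> (int \<times> 'b \<Rightarrow> complex).
           unitary_l2 S \<and>
           (\<forall>t::int. upow (shift_tensor Ur') t (clock_ket 0 psi0')
                    = S (upow (shift_tensor Ur) t (clock_ket 0 psi0))) \<and>
           (\<forall>G \<in> l2. shift_tensor Ur' G = S (shift_tensor Ur (inv_into l2 S G)))"
proof -
  obtain g :: "'a \<Rightarrow> 'b" where "bij g"
    using dim_eq by blast
  then obtain V where V: "unitary_l2 V" "V psi0 = psi0'"
    using unitary_l2_map_unit_vector[OF _ psi0 psi0'] by blast
  define S where "S = clock_intertwiner Ur Ur' V"
  have S: "unitary_l2 S"
    unfolding S_def by (rule unitary_l2_clock_intertwiner[OF Ur Ur' V(1)])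
  have comm: "S (shift_tensor Ur F) = shift_tensor Ur' (S F)" if "F \<in> l2" for F
    unfolding S_def by (rule clock_intertwiner_shift_tensor[OF Ur Ur' V(1) that])
  have "S (clock_ket 0 psi0) = clock_ket 0 psi0'"
    unfolding S_def clock_intertwiner_clock_ket_0[OF Ur Ur' V(1)] V(2) ..
  then have "\<forall>t. upow (shift_tensor Ur') t (clock_ket 0 psi0')
      = S (upow (shift_tensor Ur) t (clock_ket 0 psi0))"
    using upow_intertwine[OF S unitary_l2_shift_tensor[OF Ur] unitary_l2_shift_tensor[OF Ur']
        comm clock_ket_l2[OF psi0(1)]]
    by simp
  moreover have "\<forall>G \<in> l2. shift_tensor Ur' G = S (shift_tensor Ur (inv_into l2 S G))"
    using intertwiner_conjugate[of S "shift_tensor Ur" "shift_tensor Ur'", OF S comm] by blast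
  ultimately show ?thesis
    using S by blast
qed

end
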